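(* Let $N=\{1,\dots,n\}$ with $n\ge 2$ and $\mathcal{D}=\mathbb{R}^n_+$. A rule $R:\mathcal{D}\to\mathbb{R}^n_+$ satisfies scale invariance, downstream impartiality, upstream invariance, and equal treatment of equal upstream total inflow if and only if it is a partial compromise rule, i.e. there exists $\delta\in[0,1]$ such that for each $e\in\mathcal{D}$, $R(e)=\delta R^{NT}(e)+(1-\delta)R^{EPT}(e)$.
   Context: Agents $1,\dots,n$ are located along a linear river, lower index meaning more upstream; agent $i$ has river inflow $e_i\ge 0$, and $e=(e_1,\dots,e_n)\in\mathcal{D}=\mathbb{R}^n_+$. An allocation for $e$ is $x\in\mathbb{R}^n_+$ with $\sum_{i=1}^n x_i=\sum_{i=1}^n e_i$ and $\sum_{i=1}^k x_i\le\sum_{i=1}^k e_i$ for each $k=1,\dots,n-1$. A rule is a map $R:\mathcal{D}\to\mathbb{R}^n_+$ assigning to each $e$ an allocation $R(e)$ for $e$. No-transfer rule: $R^{NT}_i(e)=e_i$ for all $i$. Egalitarian partial-transfer rule: $R^{EPT}_i(e)=\left[1-\frac{n-i}{n-1}\right]e_i+\frac{1}{n-1}\sum_{k<i}e_k$ for all $i\in N$. Axioms: Scale invariance: for each $e\in\mathcal{D}$ and each $\gamma\in\mathbb{R}_+$, $R(\gamma e)=\gamma R(e)$. Upstream invariance: for each $e,e'\in\mathcal{D}$ such that $e_i<e'_i$ for some $i\in N$ and $e_j=e'_j$ for all $j\ne i$, we have $R_k(e)=R_k(e')$ for each $k<i$. Downstream impartiality: for each $e,e'\in\mathcal{D}$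 such that $e_i<e'_i$ for some $i\in N$ and $e_j=e'_j$ for all $j\ne i$, and for each $k,l>i$ with $e_k=e_l$, we have $R_k(e')-R_k(e)=R_l(e')-R_l(e)$. Equal treatment of equal upstream total inflow: for each $e,e'\in\mathcal{D}$ and each $i\in N$, if $e_i=e'_i$ and $\sum_{j<i}e_j=\sum_{j<i}e'_j$, then $R_i(e)=R_i(e')$. *)

theory Defs
  imports Main "HOL-Analysis.Analysis"
begin

text \<open>Agents are 1..n; an inflow profile / allocation is a function nat => real,
 whose components outside {1..n} are irrelevant. The domain D = R^n_+ is represented by
 profiles that are nonnegative on {1..n} and zero outside (canonical representatives).\<close>

definition in_domain :: "nat \<Rightarrow> (nat \<Rightarrow> real) \<Rightarrow> bool" where
  "in_domain n e \<longleftrightarrow> (\<forall>i\<in>{1..n}. 0 \<le> e i) \<and> (\<forall>i. i \<notin> {1..n} \<longrightarrow> e i = 0)"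

definition is_allocation :: "nat \<Rightarrow> (nat \<Rightarrow> real) \<Rightarrow> (nat \<Rightarrow> real) \<Rightarrow> bool" where
  "is_allocation n e x \<longleftrightarrow>
     (\<forall>i\<in>{1..n}. 0 \<le> x i) \<and>
     (\<Sum>i=1..n. x i) = (\<Sum>i=1..n. e i) \<and>
     (\<forall>k\<in>{1..n-1}. (\<Sum>i=1..k. x i) \<le> (\<Sum>i=1..k. e i))"

definition is_rule :: "nat \<Rightarrow> ((nat \<Rightarrow> real) \<Rightarrow> (nat \<Rightarrow> real)) \<Rightarrow> bool" where
  "is_rule n R \<longleftrightarrow> (\<forall>e. in_domain n e \<longrightarrow> is_allocation n e (R e))"

definition R_NT :: "nat \<Rightarrow> (nat \<Rightarrow> real) \<Rightarrow> nat \<Rightarrow> real" where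
  "R_NT n e i = e i"

definition R_EPT :: "nat \<Rightarrow> (nat \<Rightarrow> real) \<Rightarrow> nat \<Rightarrow> real" where
  "R_EPT n e i = (1 - (real n - real i) / (real n - 1)) * e i
                 + (1 / (real n - 1)) * (\<Sum>k\<in>{1..<i}. e k)"

definition scale_invariance :: "nat \<Rightarrow> ((nat \<Rightarrow> real) \<Rightarrow> (nat \<Rightarrow> real)) \<Rightarrow> bool" where
  "scale_invariance n R \<longleftrightarrow>
     (\<forall>e (\<gamma>::real). in_domain n e \<and> 0 \<le> \<gamma> \<longrightarrow>
        (\<forall>i\<in>{1..n}. R (\<lambda>j. \<gamma> * e j) i = \<gamma> * R e i))"

definition increase_at :: "nat \<Rightarrow> (nat \<Rightarrow> real) \<Rightarrow> (nat \<Rightarrow> real) \<Rightarrow> nat \<Rightarrow> bool" where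
  "increase_at n e e' i \<longleftrightarrow> i \<in> {1..n} \<and> e i < e' i \<and> (\<forall>j\<in>{1..n}. j \<noteq> i \<longrightarrow> e j = e' j)"

definition upstream_invariance :: "nat \<Rightarrow> ((nat \<Rightarrow> real) \<Rightarrow> (nat \<Rightarrow> real)) \<Rightarrow> bool" where
  "upstream_invariance n R \<longleftrightarrow>
     (\<forall>e e' i. in_domain n e \<and> in_domain n e' \<and> increase_at n e e' i \<longrightarrow>
        (\<forall>k\<in>{1..n}. k < i \<longrightarrow> R e k = R e' k))"

definition downstream_impartiality :: "nat \<Rightarrow> ((nat \<Rightarrow> real) \<Rightarrow> (nat \<Rightarrow> real)) \<Rightarrow> bool" where
  "downstream_impartiality n R \<longleftrightarrow>
     (\<forall>e e' i. in_domain n e \<and> in_domain n e' \<and> increase_at n e e' i \<longrightarrow>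
        (\<forall>k\<in>{1..n}. \<forall>l\<in>{1..n}. i < k \<and> i < l \<and> e k = e l \<longrightarrow>
            R e' k - R e k = R e' l - R e l))"

definition equal_treatment_upstream :: "nat \<Rightarrow> ((nat \<Rightarrow> real) \<Rightarrow> (nat \<Rightarrow> real)) \<Rightarrow> bool" where
  "equal_treatment_upstream n R \<longleftrightarrow>
     (\<forall>e e'. \<forall>i\<in>{1..n}. in_domain n e \<and> in_domain n e' \<and> e i = e' i \<and>
        (\<Sum>j\<in>{1..<i}. e j) = (\<Sum>j\<in>{1..<i}. e' j) \<longrightarrow> R e i = R e' i)"

definition partial_compromise :: "nat \<Rightarrow> ((nat \<Rightarrow> real) \<Rightarrow> (nat \<Rightarrow> real)) \<Rightarrow> bool" where
  "partial_compromise n R \<longleftrightarrow>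
     (\<exists>\<delta>::real. 0 \<le> \<delta> \<and> \<delta> \<le> 1 \<and>
        (\<forall>e. in_domain n e \<longrightarrow>
           (\<forall>i\<in>{1..n}. R e i = \<delta> * R_NT n e i + (1 - \<delta>) * R_EPT n e i)))"

end

theory Submission
  imports Defs
begin

text \<open>A rule satisfying the axioms is determined by the single number \<open>g = R(u)\<^sub>2\<close>, where
  \<open>u\<close> is the unit inflow at agent 1. Comparing \<open>u\<close> with the zero profile, downstream
  impartiality gives every agent \<open>2..n\<close> the share \<open>g\<close>; budget balance leaves
  \<open>1 - (n - 1) g\<close> to agent 1, and scale invariance extends this to all multiples of \<open>u\<close>.
  By equal treatment of equal upstream total inflow, \<open>R(e)\<^sub>i\<close> is agent \<open>i\<close>'s share in the
  profile with inflow \<open>s\<^sub>i = \<Sum>k<i. e\<^sub>k\<close> at agent 1 and \<open>e\<^sub>i\<close> at agent \<open>i\<close>. In that profile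
  every other agent is treated as in a multiple of \<open>u\<close>, so budget balance yields
  \<open>R(e)\<^sub>i = e\<^sub>i - (n - i) g e\<^sub>i + g s\<^sub>i\<close>. This is the partial compromise rule with
  \<open>\<delta> = 1 - (n - 1) g\<close>, and the four axioms are immediate for such formulas.\<close>

definition inflow_at :: "nat \<Rightarrow> real \<Rightarrow> nat \<Rightarrow> real" where
  "inflow_at k a = (\<lambda>j. if j = k then a else 0)"

text \<open>Agent \<open>i\<close> passes the fraction \<open>g\<close> of its own inflow to each of its \<open>n - i\<close>
  downstream agents.\<close>
definition uniform_transfer :: "nat \<Rightarrow> real \<Rightarrow> (nat \<Rightarrow> real) \<Rightarrow> nat \<Rightarrow> real" where
  "uniform_transfer n g e i = e i - g * (real n - real i) * e i + g * (\<Sum>k\<in>{1..<i}. e k)"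

definition uniform_transfer_rule :: "nat \<Rightarrow> real \<Rightarrow> ((nat \<Rightarrow> real) \<Rightarrow> (nat \<Rightarrow> real)) \<Rightarrow> bool" where
  "uniform_transfer_rule n g R \<longleftrightarrow>
     (\<forall>e. in_domain n e \<longrightarrow> (\<forall>i\<in>{1..n}. R e i = uniform_transfer n g e i))"

lemma in_domain_scale: "in_domain n e \<Longrightarrow> 0 \<le> \<gamma> \<Longrightarrow> in_domain n (\<lambda>j. \<gamma> * e j)"
  by (auto simp: in_domain_def)

lemma in_domain_inflow_at: "k \<in> {1..n} \<Longrightarrow> 0 \<le> a \<Longrightarrow> in_domain n (inflow_at k a)"
  by (auto simp: in_domain_def inflow_at_def)

lemma sum_inflow_at: "finite A \<Longrightarrow> (\<Sum>j\<in>A. inflow_at k a j) = (if k \<in> A then a else 0)"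
  by (simp add: inflow_at_def)

lemma scale_inflow_at: "(\<lambda>j. s * inflow_at k a j) = inflow_at k (s * a)"
  by (auto simp: inflow_at_def)

lemma sum_prefix_sums:
  fixes e :: "nat \<Rightarrow> real"
  shows "(\<Sum>i=1..n. \<Sum>k\<in>{1..<i}. e k) = (\<Sum>i=1..n. (real n - real i) * e i)"
proof (induction n)
  case 0
  then show ?case by simp
next
  case (Suc n)
  have "(\<Sum>i=1..Suc n. (real (Suc n) - real i) * e i)
      = (\<Sum>i=1..n. (real n - real i) * e i + e i)"
    by (simp add: algebra_simps)
  also have "\<dots> = (\<Sum>i=1..n. (real n - real i) * e i) + (\<Sum>i=1..n. e i)"
    by (rule sum.distrib)
  finally show ?case
    using Suc.IH by (simp add: atLeastLessThanSuc_atLeastAtMost)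
qed

lemma sum_uniform_transfer: "(\<Sum>i=1..n. uniform_transfer n g e i) = (\<Sum>i=1..n. e i)"
proof -
  have "(\<Sum>i=1..n. uniform_transfer n g e i)
      = (\<Sum>i=1..n. e i) - g * (\<Sum>i=1..n. (real n - real i) * e i)
          + g * (\<Sum>i=1..n. \<Sum>k\<in>{1..<i}. e k)"
    by (simp add: uniform_transfer_def sum.distrib sum_subtractf sum_distrib_left algebra_simps)
  then show ?thesis unfolding sum_prefix_sums by simp
qed

lemma uniform_transfer_scale:
  "uniform_transfer n g (\<lambda>j. \<gamma> * e j) i = \<gamma> * uniform_transfer n g e i"
  by (simp add: uniform_transfer_def sum_distrib_left algebra_simps)

lemma uniform_transfer_cong:
  "e i = e' i \<Longrightarrow> (\<Sum>k\<in>{1..<i}. e k) = (\<Sum>k\<in>{1..<i}. e' k)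
    \<Longrightarrow> uniform_transfer n g e i = uniform_transfer n g e' i"
  by (simp add: uniform_transfer_def)

lemma prefix_sum_increase_at:
  assumes "increase_at n e e' i" and "m \<le> Suc n"
  shows "(\<Sum>k\<in>{1..<m}. e' k) = (\<Sum>k\<in>{1..<m}. e k) + (if i < m then e' i - e i else 0)"
proof -
  have "(\<Sum>k\<in>{1..<m}. e' k - e k) = (\<Sum>k\<in>{1..<m}. if k = i then e' i - e i else 0)"
    using assms by (intro sum.cong) (auto simp: increase_at_def)
  also have "\<dots> = (if i < m then e' i - e i else 0)"
    using assms by (auto simp: increase_at_def)
  finally show ?thesis by (simp add: sum_subtractf)
qed

lemma uniform_transfer_rule_scale_invariance:
  assumes "uniform_transfer_rule n g R"
  shows "scale_invariance n R"
  unfolding scale_invariance_def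
proof (intro allI impI ballI)
  fix e and \<gamma> :: real and i
  assume dom: "in_domain n e \<and> 0 \<le> \<gamma>" and i: "i \<in> {1..n}"
  then have "R (\<lambda>j. \<gamma> * e j) i = uniform_transfer n g (\<lambda>j. \<gamma> * e j) i"
    using assms in_domain_scale unfolding uniform_transfer_rule_def by blast
  also have "\<dots> = \<gamma> * R e i"
    using assms dom i by (simp add: uniform_transfer_scale uniform_transfer_rule_def)
  finally show "R (\<lambda>j. \<gamma> * e j) i = \<gamma> * R e i" .
qed

lemma uniform_transfer_rule_upstream_invariance:
  assumes "uniform_transfer_rule n g R"
  shows "upstream_invariance n R"
  unfolding upstream_invariance_def
proof (intro allI impI ballI)
  fix e e' i k
  assume dom: "in_domain n e \<and> in_domain n e' \<and> increase_at n e e' i"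
    and k: "k \<in> {1..n}" "k < i"
  then have "uniform_transfer n g e k = uniform_transfer n g e' k"
    by (intro uniform_transfer_cong) (auto simp: increase_at_def prefix_sum_increase_at)
  then show "R e k = R e' k"
    using assms dom k by (simp add: uniform_transfer_rule_def)
qed

lemma uniform_transfer_rule_downstream_impartiality:
  assumes "uniform_transfer_rule n g R"
  shows "downstream_impartiality n R"
  unfolding downstream_impartiality_def
proof (intro allI impI ballI)
  fix e e' i k l
  assume dom: "in_domain n e \<and> in_domain n e' \<and> increase_at n e e' i"
    and k: "k \<in> {1..n}" and l: "l \<in> {1..n}" and kl: "i < k \<and> i < l \<and> e k = e l"
  have gain: "R e' m - R e m = g * (e' i - e i)" if m: "m \<in> {1..n}" "i < m" for m
  proof -
    have "e' m = e m"
      using dom m by (auto simp: increase_at_def)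
    have "R e' m - R e m = uniform_transfer n g e' m - uniform_transfer n g e m"
      using assms dom m by (simp add: uniform_transfer_rule_def)
    also have "\<dots> = g * ((\<Sum>k\<in>{1..<m}. e' k) - (\<Sum>k\<in>{1..<m}. e k))"
      using \<open>e' m = e m\<close> by (simp add: uniform_transfer_def algebra_simps)
    also have "\<dots> = g * (e' i - e i)"
      using dom m prefix_sum_increase_at[of n e e' i m] by simp
    finally show ?thesis .
  qed
  show "R e' k - R e k = R e' l - R e l"
    using gain[OF k] gain[OF l] kl by simp
qed

lemma uniform_transfer_rule_equal_treatment_upstream:
  assumes "uniform_transfer_rule n g R"
  shows "equal_treatment_upstream n R"
  unfolding equal_treatment_upstream_def
proof (intro allI ballI impI)
  fix e e' i
  assume i: "i \<in> {1..n}" and same: "in_domain n e \<and> in_domain n e' \<and> e i = e' i \<and>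
    (\<Sum>j\<in>{1..<i}. e j) = (\<Sum>j\<in>{1..<i}. e' j)"
  then have "R e i = uniform_transfer n g e i" "R e' i = uniform_transfer n g e' i"
    using assms by (auto simp: uniform_transfer_rule_def)
  moreover have "uniform_transfer n g e i = uniform_transfer n g e' i"
    using same by (intro uniform_transfer_cong) auto
  ultimately show "R e i = R e' i"
    by simp
qed

lemma NT_EPT_mix_eq_uniform_transfer:
  "\<delta> * R_NT n e i + (1 - \<delta>) * R_EPT n e i = uniform_transfer n ((1 - \<delta>) / (real n - 1)) e i"
proof -
  define c where "c = 1 / (real n - 1)"
  have quotients: "(real n - real i) / (real n - 1) = (real n - real i) * c"
    "(1 - \<delta>) / (real n - 1) = (1 - \<delta>) * c"
    by (simp_all add: c_def)
  show ?thesis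
    unfolding R_NT_def R_EPT_def uniform_transfer_def quotients c_def[symmetric]
    by (simp add: algebra_simps)
qed

lemma partial_compromise_iff_uniform_transfer_rule:
  assumes "2 \<le> n"
  shows "partial_compromise n R \<longleftrightarrow>
    (\<exists>g. 0 \<le> g \<and> (real n - 1) * g \<le> 1 \<and> uniform_transfer_rule n g R)"
proof
  assume "partial_compromise n R"
  then obtain \<delta> where "0 \<le> \<delta>" "\<delta> \<le> 1"
    and "\<forall>e. in_domain n e \<longrightarrow> (\<forall>i\<in>{1..n}. R e i = \<delta> * R_NT n e i + (1 - \<delta>) * R_EPT n e i)"
    by (auto simp: partial_compromise_def)
  with assms show "\<exists>g. 0 \<le> g \<and> (real n - 1) * g \<le> 1 \<and> uniform_transfer_rule n g R"
    by (intro exI[of _ "(1 - \<delta>) / (real n - 1)"])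
      (simp add: uniform_transfer_rule_def NT_EPT_mix_eq_uniform_transfer)
next
  assume "\<exists>g. 0 \<le> g \<and> (real n - 1) * g \<le> 1 \<and> uniform_transfer_rule n g R"
  then obtain g where g: "0 \<le> g" "(real n - 1) * g \<le> 1" and R: "uniform_transfer_rule n g R"
    by blast
  define \<delta> where "\<delta> = 1 - (real n - 1) * g"
  have "(1 - \<delta>) / (real n - 1) = g"
    using assms by (simp add: \<delta>_def)
  then have "\<delta> * R_NT n e i + (1 - \<delta>) * R_EPT n e i = uniform_transfer n g e i" for e i
    using NT_EPT_mix_eq_uniform_transfer[of \<delta> n e i] by simp
  then show "partial_compromise n R"
    using g R assms unfolding partial_compromise_def uniform_transfer_rule_def
    by (intro exI[of _ \<delta>]) (simp add: \<delta>_def)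
qed

lemma rule_eq_uniform_transfer_at_remaining_agent:
  assumes "is_rule n R" and "in_domain n e" and i: "i \<in> {1..n}"
    and others: "\<forall>j\<in>{1..n} - {i}. R e j = uniform_transfer n g e j"
  shows "R e i = uniform_transfer n g e i"
proof -
  have "(\<Sum>j=1..n. R e j) = (\<Sum>j=1..n. uniform_transfer n g e j)"
    using assms sum_uniform_transfer[of n g e] by (simp add: is_rule_def is_allocation_def)
  moreover have "(\<Sum>j\<in>{1..n} - {i}. R e j) = (\<Sum>j\<in>{1..n} - {i}. uniform_transfer n g e j)"
    using others by (intro sum.cong) auto
  moreover have "(\<Sum>j=1..n. f j) = f i + (\<Sum>j\<in>{1..n} - {i}. f j)" for f :: "nat \<Rightarrow> real"
    using i by (intro sum.remove) auto
  ultimately show ?thesis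
    by (metis add_right_cancel)
qed

lemma rule_at_top_source:
  assumes "2 \<le> n" and rule: "is_rule n R"
    and S: "scale_invariance n R" and D: "downstream_impartiality n R"
    and s: "0 \<le> s" and k: "k \<in> {1..n}"
  shows "R (inflow_at 1 s) k = uniform_transfer n (R (inflow_at 1 1) 2) (inflow_at 1 s) k"
proof -
  define u where "u = inflow_at 1 1"
  define g where "g = R u 2"
  have u: "in_domain n u" "in_domain n (\<lambda>j. 0)"
    using assms by (simp_all add: u_def in_domain_inflow_at) (simp add: in_domain_def)
  have scale: "R (\<lambda>j. \<gamma> * u j) j = \<gamma> * R u j" if "0 \<le> \<gamma>" "j \<in> {1..n}" for \<gamma> j
    using S u that by (simp add: scale_invariance_def)
  have no_inflow: "R (\<lambda>j. 0) j = 0" if "j \<in> {1..n}" for j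
    using scale[of 0 j] that by simp
  have downstream: "R u j = uniform_transfer n g u j" if j: "j \<in> {2..n}" for j
  proof -
    have "increase_at n (\<lambda>j. 0) u 1"
      using assms by (simp add: increase_at_def u_def inflow_at_def)
    then have "R u j - R (\<lambda>j. 0) j = R u 2 - R (\<lambda>j. 0) 2"
      using D u j assms by (simp add: downstream_impartiality_def)
    then show ?thesis
      using no_inflow[of j] no_inflow[of 2] j assms
      by (simp add: g_def uniform_transfer_def u_def sum_inflow_at inflow_at_def)
  qed
  have "R u j = uniform_transfer n g u j" if "j \<in> {1..n}" for j
  proof (cases "j = 1")
    case True
    then have "\<forall>j'\<in>{1..n} - {j}. R u j' = uniform_transfer n g u j'"
      using downstream by auto
    with rule u(1) that show ?thesis
      by (rule rule_eq_uniform_transfer_at_remaining_agent)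
  next
    case False
    with that downstream show ?thesis by simp
  qed
  then have "R (\<lambda>j. s * u j) k = uniform_transfer n g (\<lambda>j. s * u j) k"
    using scale[OF s k] k by (simp add: uniform_transfer_scale)
  moreover have "(\<lambda>j. s * u j) = inflow_at 1 s"
    using scale_inflow_at[of s 1 1] by (simp add: u_def)
  ultimately show ?thesis
    by (simp only: g_def u_def)
qed

lemma uniform_transfer_rule_if_top_sources:
  assumes rule: "is_rule n R" and E: "equal_treatment_upstream n R"
    and top: "\<And>s k. 0 \<le> s \<Longrightarrow> k \<in> {1..n} \<Longrightarrow>
      R (inflow_at 1 s) k = uniform_transfer n g (inflow_at 1 s) k"
  shows "uniform_transfer_rule n g R"
  unfolding uniform_transfer_rule_def
proof (intro allI impI ballI)
  have transfer: "R e i = uniform_transfer n g e i"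
    if "in_domain n e" "in_domain n e'" "i \<in> {1..n}" "e i = e' i"
      "(\<Sum>k\<in>{1..<i}. e k) = (\<Sum>k\<in>{1..<i}. e' k)" "R e' i = uniform_transfer n g e' i"
    for e e' i
  proof -
    have "R e i = R e' i"
      using E that unfolding equal_treatment_upstream_def by blast
    with that show ?thesis
      using uniform_transfer_cong[of e i e' n g] by simp
  qed
  have at_top_or_dry: "R q j = uniform_transfer n g q j"
    if q: "in_domain n q" and j: "j \<in> {1..n}" and top_or_dry: "j = 1 \<or> q j = 0" for q j
  proof -
    define \<sigma> where "\<sigma> = (\<Sum>k\<in>{1..j}. q k)"
    have \<sigma>: "0 \<le> \<sigma>" "\<sigma> = (\<Sum>k\<in>{1..<j}. q k) + q j"
      using q j by (auto simp: \<sigma>_def in_domain_def intro: sum_nonneg)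
        (simp add: atLeastLessThanSuc_atLeastAtMost[symmetric])
    show ?thesis
    proof (rule transfer[OF q in_domain_inflow_at[OF _ \<sigma>(1)] j _ _ top[OF \<sigma>(1) j]])
      show "1 \<in> {1..n}" using j by simp
      show "q j = inflow_at 1 \<sigma> j"
        using top_or_dry \<sigma>(2) by (auto simp: inflow_at_def)
      show "(\<Sum>k\<in>{1..<j}. q k) = (\<Sum>k\<in>{1..<j}. inflow_at 1 \<sigma> k)"
        using top_or_dry \<sigma>(2) j by (auto simp: sum_inflow_at)
    qed
  qed
  fix e i
  assume e: "in_domain n e" and i: "i \<in> {1..n}"
  show "R e i = uniform_transfer n g e i"
  proof (cases "i = 1")
    case True
    with e i show ?thesis by (intro at_top_or_dry) auto
  next
    case False
    define s where "s = (\<Sum>k\<in>{1..<i}. e k)"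
    define p where "p = (\<lambda>j. inflow_at 1 s j + inflow_at i (e i) j)"
    have s: "0 \<le> s"
      unfolding s_def using e i by (intro sum_nonneg) (auto simp: in_domain_def)
    have p: "in_domain n p"
      using e i s by (auto simp: p_def in_domain_def inflow_at_def)
    have "p i = e i" "(\<Sum>k\<in>{1..<i}. p k) = s"
      using False i by (simp_all add: p_def inflow_at_def sum.distrib sum_inflow_at)
    moreover have "R p i = uniform_transfer n g p i"
      using rule p i
    proof (rule rule_eq_uniform_transfer_at_remaining_agent)
      show "\<forall>j\<in>{1..n} - {i}. R p j = uniform_transfer n g p j"
      proof
        fix j
        assume "j \<in> {1..n} - {i}"
        then have "j \<in> {1..n}" "j = 1 \<or> p j = 0"
          by (auto simp: p_def inflow_at_def)
        then show "R p j = uniform_transfer n g p j"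
          by (rule at_top_or_dry[OF p])
      qed
    qed
    ultimately show ?thesis
      using transfer[OF e p i] by (simp add: s_def)
  qed
qed

lemma uniform_transfer_rule_bounds:
  assumes "2 \<le> n" and rule: "is_rule n R" and R: "uniform_transfer_rule n g R"
  shows "0 \<le> g" and "(real n - 1) * g \<le> 1"
proof -
  have u: "in_domain n (inflow_at 1 1)"
    using assms by (simp add: in_domain_inflow_at)
  then have "0 \<le> R (inflow_at 1 1) k" if "k \<in> {1..n}" for k
    using rule that by (simp add: is_rule_def is_allocation_def)
  moreover have "R (inflow_at 1 1) k = uniform_transfer n g (inflow_at 1 1) k" if "k \<in> {1..n}" for k
    using R u that by (simp add: uniform_transfer_rule_def)
  ultimately have "0 \<le> uniform_transfer n g (inflow_at 1 1) 1" "0 \<le> uniform_transfer n g (inflow_at 1 1) 2"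
    using assms by auto
  then show "0 \<le> g" "(real n - 1) * g \<le> 1"
    by (simp_all add: uniform_transfer_def inflow_at_def algebra_simps)
qed

theorem theorem5:
  fixes n :: nat and R :: "(nat \<Rightarrow> real) \<Rightarrow> (nat \<Rightarrow> real)"
  assumes "2 \<le> n" and "is_rule n R"
  shows "(scale_invariance n R \<and> downstream_impartiality n R \<and> upstream_invariance n R
           \<and> equal_treatment_upstream n R) \<longleftrightarrow> partial_compromise n R"
proof
  assume "scale_invariance n R \<and> downstream_impartiality n R \<and> upstream_invariance n R
    \<and> equal_treatment_upstream n R"
  then have "uniform_transfer_rule n (R (inflow_at 1 1) 2) R"
    using assms rule_at_top_source uniform_transfer_rule_if_top_sources by blast
  then show "partial_compromise n R"
    using assms uniform_transfer_rule_bounds partial_compromise_iff_uniform_transfer_rule by blast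
next
  assume "partial_compromise n R"
  then obtain g where "uniform_transfer_rule n g R"
    using assms partial_compromise_iff_uniform_transfer_rule by blast
  then show "scale_invariance n R \<and> downstream_impartiality n R \<and> upstream_invariance n R
    \<and> equal_treatment_upstream n R"
    by (simp add: uniform_transfer_rule_scale_invariance uniform_transfer_rule_downstream_impartiality
      uniform_transfer_rule_upstream_invariance uniform_transfer_rule_equal_treatment_upstream)
qed

end
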